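(* Let $n\ge 1$, let $w \in S_n$ be a permutation of $\{1,\dots,n\}$, and let $\phi(w) = p_1 \cdots p_n$ be the associated Motzkin path. Then \[\operatorname{dep}(w) = \sum_{k:\, p_k = D} k \;-\; \sum_{i:\, p_i = U} i.\]
   Context: For $w\in S_n$, the depth is $\operatorname{dep}(w)=\sum_{i:\,w(i)>i}(w(i)-i)$, i.e. half the total displacement $\sum_{i=1}^n |w(i)-i|$. (This equals the minimum of $\sum_{s=1}^k (j_s-i_s)$ over all factorizations $w=(i_1\,j_1)\cdots(i_k\,j_k)$ into transpositions with $i_s<j_s$.) A Motzkin path of length $n$ is a word $p_1\cdots p_n$ in the letters $U,D,H$ such that the subword formed by the letters $U$ and $D$ is a balanced parenthesization ($U$ opening, $D$ closing). The map $\phi\colon S_n\to\{\text{Motzkin paths of length } n\}$ is defined by $\phi(w)=p_1\cdots p_n$ where $p_i=U$ if $w^{-1}(i)>i<w(i)$, $p_i=D$ if $w^{-1}(i)<i>w(i)$, and $p_i=H$ otherwise. *)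

theory Defs
  imports "HOL-Combinatorics.Permutations"
begin

text \<open>Permutations of {1..n} are functions w :: nat => nat with w permutes {1..n}.\<close>

definition dep :: "nat \<Rightarrow> (nat \<Rightarrow> nat) \<Rightarrow> nat" where
  "dep n w = (\<Sum>i\<in>{i\<in>{1..n}. w i > i}. w i - i)"

datatype step = U | D | H

definition motzkin_step :: "(nat \<Rightarrow> nat) \<Rightarrow> nat \<Rightarrow> step" where
  "motzkin_step w i =
     (if inv w i > i \<and> i < w i then U
      else if inv w i < i \<and> i > w i then D
      else H)"

text \<open>phi w = p_1 ... p_n; list index k-1 holds p_k.\<close>
definition phi :: "nat \<Rightarrow> (nat \<Rightarrow> nat) \<Rightarrow> step list" where
  "phi n w = map (motzkin_step w) [1..<n+1]"

end

theory Submission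
  imports Defs
begin

text \<open>Write \<open>dep(w)\<close> as the sum of \<open>w(i)\<close> minus the sum of \<open>i\<close> over the exceedances
  \<open>i < w(i)\<close>; substituting \<open>j = w(i)\<close> turns the first sum into the sum of \<open>j\<close> over all
  \<open>j\<close> with \<open>w\<inverse>(j) < j\<close>. An index with \<open>w\<inverse>(j) < j < w(j)\<close> occurs in both sums and
  cancels. Since \<open>w\<close> and \<open>w\<inverse>\<close> have the same fixed points, the remaining indices of
  the first sum are exactly the down steps and those of the second exactly the up steps.\<close>

lemma sum_exceedance_values_permutes:
  assumes "w permutes S"
  shows "(\<Sum>i\<in>{i\<in>S. i < w i}. w i) = (\<Sum>j\<in>{j\<in>S. inv w j < j}. j)"
proof (rule sum.reindex_bij_betw)
  have inv_in: "inv w j \<in> S \<longleftrightarrow> j \<in> S" for j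
    using assms by (rule permutes_in_image[OF permutes_inv])
  have "w ` {i\<in>S. i < w i} = {j\<in>S. inv w j < j}"
  proof (intro equalityI subsetI)
    fix j assume "j \<in> {j\<in>S. inv w j < j}"
    then have "inv w j \<in> {i\<in>S. i < w i}" and "j = w (inv w j)"
      using assms inv_in by (auto simp: permutes_inverses)
    then show "j \<in> w ` {i\<in>S. i < w i}" by blast
  qed (use assms in \<open>auto simp: permutes_inverses permutes_in_image\<close>)
  then show "bij_betw w {i\<in>S. i < w i} {j\<in>S. inv w j < j}"
    using assms by (auto intro: bij_betw_subset[OF permutes_imp_bij])
qed

lemma dep_eq_inv_descents_minus_exceedances:
  assumes "w permutes {1..n}"
  shows "int (dep n w) =
           int (\<Sum>j\<in>{j\<in>{1..n}. inv w j < j}. j) - int (\<Sum>i\<in>{i\<in>{1..n}. i < w i}. i)"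
proof -
  have "int (dep n w) = (\<Sum>i\<in>{i\<in>{1..n}. i < w i}. int (w i) - int i)"
    unfolding dep_def by (simp add: of_nat_diff)
  also have "\<dots> = int (\<Sum>i\<in>{i\<in>{1..n}. i < w i}. w i) - int (\<Sum>i\<in>{i\<in>{1..n}. i < w i}. i)"
    by (simp add: sum_subtractf of_nat_sum)
  also have "\<dots> = int (\<Sum>j\<in>{j\<in>{1..n}. inv w j < j}. j) - int (\<Sum>i\<in>{i\<in>{1..n}. i < w i}. i)"
    by (simp only: sum_exceedance_values_permutes[OF assms])
  finally show ?thesis .
qed

lemma motzkin_step_eq_D_iff:
  assumes "bij w"
  shows "motzkin_step w j = D \<longleftrightarrow> inv w j < j \<and> \<not> j < w j"
  using bij_inv_eq_iff[OF assms, of j j]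
  by (auto simp: motzkin_step_def linorder_neq_iff)

lemma motzkin_step_eq_U_iff:
  assumes "bij w"
  shows "motzkin_step w j = U \<longleftrightarrow> j < w j \<and> \<not> inv w j < j"
  using bij_inv_eq_iff[OF assms, of j j]
  by (auto simp: motzkin_step_def linorder_neq_iff)

lemma sum_inv_descents_minus_sum_exceedances:
  assumes "bij w" and "finite S"
  shows "int (\<Sum>j\<in>{j\<in>S. inv w j < j}. j) - int (\<Sum>i\<in>{i\<in>S. i < w i}. i) =
           int (\<Sum>k\<in>{k\<in>S. motzkin_step w k = D}. k) - int (\<Sum>i\<in>{i\<in>S. motzkin_step w i = U}. i)"
proof -
  define B where "B = {j\<in>S. inv w j < j \<and> j < w j}"
  define Ds where "Ds = {k\<in>S. motzkin_step w k = D}"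
  define Us where "Us = {k\<in>S. motzkin_step w k = U}"
  have desc: "{j\<in>S. inv w j < j} = Ds \<union> B" and exc: "{i\<in>S. i < w i} = Us \<union> B"
    unfolding B_def Ds_def Us_def motzkin_step_eq_D_iff[OF assms(1)] motzkin_step_eq_U_iff[OF assms(1)]
    by auto
  have "Ds \<inter> B = {}" "Us \<inter> B = {}"
    unfolding B_def Ds_def Us_def motzkin_step_eq_D_iff[OF assms(1)] motzkin_step_eq_U_iff[OF assms(1)]
    by auto
  moreover have "finite Ds" "finite Us" "finite B"
    using assms(2) by (simp_all add: B_def Ds_def Us_def)
  ultimately have "(\<Sum>j\<in>Ds \<union> B. j) = (\<Sum>j\<in>Ds. j) + (\<Sum>j\<in>B. j)"
    and "(\<Sum>j\<in>Us \<union> B. j) = (\<Sum>j\<in>Us. j) + (\<Sum>j\<in>B. j)"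
    by (simp_all add: sum.union_disjoint)
  then show ?thesis
    unfolding desc exc Ds_def[symmetric] Us_def[symmetric] by simp
qed

lemma nth_phi:
  assumes "k \<in> {1..n}"
  shows "phi n w ! (k - 1) = motzkin_step w k"
  using assms unfolding phi_def by (auto simp del: upt_Suc simp: nth_map)

lemma phi_step_positions: "{k\<in>{1..n}. phi n w ! (k - 1) = s} = {k\<in>{1..n}. motzkin_step w k = s}"
  using nth_phi by auto

theorem proposition3p1:
  fixes n :: nat and w :: "nat \<Rightarrow> nat"
  assumes "n \<ge> 1" and "w permutes {1..n}"
  shows "int (dep n w) =
           int (\<Sum>k\<in>{k\<in>{1..n}. phi n w ! (k - 1) = D}. k)
         - int (\<Sum>i\<in>{i\<in>{1..n}. phi n w ! (i - 1) = U}. i)"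
  unfolding phi_step_positions dep_eq_inv_descents_minus_exceedances[OF assms(2)]
  by (rule sum_inv_descents_minus_sum_exceedances[OF permutes_bij[OF assms(2)] finite_atLeastAtMost])

end
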